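(* Consider a batch contextual bandit with finite context space $\mathcal{S}$, finite action space $\mathcal{A}$, context distribution $d_0$ and reward distributions $R(s,a)\in\Delta([0,R_{\max}])$. Let $\pi_b$ be a behavior policy, $\mu:=d_0\times\pi_b$, $\mathcal{F}$ a finite class of functions $\mathcal{S}\times\mathcal{A}\to[0,R_{\max}]$, and $\hat f\in\mathcal{F}$ with $\mathcal{L}_\mu(\hat f)-\min_{f\in\mathcal{F}}\mathcal{L}_\mu(f)\le\epsilon$. Let $Q^\star(s,a)=\mathbb{E}_{r\sim R(s,a)}[r]$ and $\epsilon_{\mathrm{approx}}:=\inf_{f\in\mathcal{F}}\|f-Q^\star\|_\mu^2$. Assume only that there is a constant $C<+\infty$ with $\pi_b(a\mid s)\ge1/C$ for all $s,a$. Then $$v^{\pi_{\hat f}}\ \ge\ v^\star-2\sqrt{C(\epsilon+\epsilon_{\mathrm{approx}})}.$$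
   Context: Data are generated by $s\sim d_0$, $a\sim\pi_b(\cdot\mid s)$, $r\sim R(s,a)$; $\mu$ is the joint distribution of $(s,a)$. $\mathcal{L}_\mu(f):=\mathbb{E}_{(s,a)\sim\mu,\,r\sim R(s,a)}[(f(s,a)-r)^2]$. For a distribution $\nu$ on $\mathcal{S}\times\mathcal{A}$, $\|g\|_\nu^2:=\mathbb{E}_{(s,a)\sim\nu}[g(s,a)^2]$. $\pi_f$ is the greedy policy $s\mapsto\arg\max_a f(s,a)$ (fixed tie-breaking). $v^\pi:=\mathbb{E}_{s\sim d_0,\,r\sim R(s,\pi(s))}[r]$ and $v^\star:=\mathbb{E}_{s\sim d_0}[\max_aQ^\star(s,a)]$. *)

theory Defs
  imports "HOL-Probability.Probability"
begin

definition Qstar :: "('s \<Rightarrow> 'a \<Rightarrow> real measure) \<Rightarrow> 's \<Rightarrow> 'a \<Rightarrow> real" where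
  "Qstar R s a = (\<integral>r. r \<partial>(R s a))"

definition sq_loss ::
  "('s::finite) pmf \<Rightarrow> ('s \<Rightarrow> ('a::finite) pmf) \<Rightarrow> ('s \<Rightarrow> 'a \<Rightarrow> real measure)
     \<Rightarrow> ('s \<Rightarrow> 'a \<Rightarrow> real) \<Rightarrow> real" where
  "sq_loss d0 pib R f =
     (\<Sum>s\<in>UNIV. \<Sum>a\<in>UNIV. pmf d0 s * pmf (pib s) a * (\<integral>r. (f s a - r)\<^sup>2 \<partial>(R s a)))"

definition sq_norm_mu ::
  "('s::finite) pmf \<Rightarrow> ('s \<Rightarrow> ('a::finite) pmf) \<Rightarrow> ('s \<Rightarrow> 'a \<Rightarrow> real) \<Rightarrow> real" where
  "sq_norm_mu d0 pib g = (\<Sum>s\<in>UNIV. \<Sum>a\<in>UNIV. pmf d0 s * pmf (pib s) a * (g s a)\<^sup>2)"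

definition greedy :: "('s \<Rightarrow> 'a \<Rightarrow> real) \<Rightarrow> ('s \<Rightarrow> 'a) \<Rightarrow> bool" where
  "greedy f pol \<longleftrightarrow> (\<forall>s a. f s a \<le> f s (pol s))"

definition value_pol ::
  "('s::finite) pmf \<Rightarrow> ('s \<Rightarrow> 'a \<Rightarrow> real measure) \<Rightarrow> ('s \<Rightarrow> 'a) \<Rightarrow> real" where
  "value_pol d0 R pol = (\<Sum>s\<in>UNIV. pmf d0 s * Qstar R s (pol s))"

definition value_opt ::
  "('s::finite) pmf \<Rightarrow> ('s \<Rightarrow> ('a::finite) \<Rightarrow> real measure) \<Rightarrow> real" where
  "value_opt d0 R = (\<Sum>s\<in>UNIV. pmf d0 s * (MAX a. Qstar R s a))"

definition eps_approx ::
  "('s::finite) pmf \<Rightarrow> ('s \<Rightarrow> ('a::finite) pmf) \<Rightarrow> ('s \<Rightarrow> 'a \<Rightarrow> real measure)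
     \<Rightarrow> ('s \<Rightarrow> 'a \<Rightarrow> real) set \<Rightarrow> real" where
  "eps_approx d0 pib R F = (INF f\<in>F. sq_norm_mu d0 pib (\<lambda>s a. f s a - Qstar R s a))"

end

theory Submission
  imports Defs
begin

text \<open>By the bias-variance decomposition, the squared loss of f is
  \<open>\<parallel>f - Q\<^sup>\<star>\<parallel>\<^sub>\<mu>\<^sup>2\<close> plus a constant, so the near-minimiser fhat satisfies
  \<open>\<parallel>fhat - Q\<^sup>\<star>\<parallel>\<^sub>\<mu>\<^sup>2 \<le> \<epsilon> + \<epsilon>\<^sub>a\<^sub>p\<^sub>p\<^sub>r\<^sub>o\<^sub>x\<close>. As the policy is greedy for fhat, its
  regret in context s against an optimal action is at most the error \<open>|fhat - Q\<^sup>\<star>|\<close> at that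
  action plus the error at the chosen action. Averaging each error over \<open>d\<^sub>0\<close>, Jensen and the
  coverage \<open>\<pi>\<^sub>b(a|s) \<ge> 1/C\<close> bound it by \<open>\<surd>(C \<parallel>fhat - Q\<^sup>\<star>\<parallel>\<^sub>\<mu>\<^sup>2)\<close>.\<close>

lemma weighted_mean_square_le:
  fixes p x :: "'s \<Rightarrow> real"
  assumes "finite A" "\<And>s. s \<in> A \<Longrightarrow> 0 \<le> p s" "sum p A = 1"
  shows "(\<Sum>s\<in>A. p s * x s)\<^sup>2 \<le> (\<Sum>s\<in>A. p s * (x s)\<^sup>2)"
proof -
  define m where "m = (\<Sum>s\<in>A. p s * x s)"
  have "0 \<le> (\<Sum>s\<in>A. p s * (x s - m)\<^sup>2)"
    using assms(2) by (intro sum_nonneg) auto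
  also have "\<dots> = (\<Sum>s\<in>A. p s * (x s)\<^sup>2 - 2 * m * (p s * x s) + m\<^sup>2 * p s)"
    by (intro sum.cong) (auto simp: power2_eq_square algebra_simps)
  also have "\<dots> = (\<Sum>s\<in>A. p s * (x s)\<^sup>2) - 2 * m * m + m\<^sup>2 * 1"
    by (simp add: sum.distrib sum_subtractf sum_distrib_left[symmetric] m_def assms(3))
  finally show ?thesis unfolding m_def[symmetric] by (simp add: power2_eq_square)
qed

lemma integral_square_diff_eq:
  fixes M :: "real measure" and c :: real
  assumes "prob_space M" "integrable M (\<lambda>r. r)" "integrable M (\<lambda>r. r\<^sup>2)"
  shows "(\<integral>r. (c - r)\<^sup>2 \<partial>M) = (c - (\<integral>r. r \<partial>M))\<^sup>2 + ((\<integral>r. r\<^sup>2 \<partial>M) - (\<integral>r. r \<partial>M)\<^sup>2)"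
proof -
  interpret prob_space M by fact
  have "(\<integral>r. (c - r)\<^sup>2 \<partial>M) = (\<integral>r. (c\<^sup>2 - 2 * c * r) + r\<^sup>2 \<partial>M)"
    by (intro Bochner_Integration.integral_cong) (auto simp: power2_eq_square algebra_simps)
  also have "\<dots> = c\<^sup>2 - 2 * c * (\<integral>r. r \<partial>M) + (\<integral>r. r\<^sup>2 \<partial>M)"
    using assms(2,3) prob_space
    by (simp add: Bochner_Integration.integral_add Bochner_Integration.integral_diff)
  finally show ?thesis by (simp add: power2_eq_square algebra_simps)
qed

lemma integrable_bounded_real_powers:
  fixes M :: "real measure"
  assumes "finite_measure M" "sets M = sets borel" "AE r in M. 0 \<le> r \<and> r \<le> B"
  shows "integrable M (\<lambda>r::real. r)" "integrable M (\<lambda>r::real. r\<^sup>2)"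
proof -
  have meas: "(\<lambda>r::real. r) \<in> borel_measurable M" "(\<lambda>r::real. r\<^sup>2) \<in> borel_measurable M"
    unfolding measurable_cong_sets[OF assms(2) refl] by simp_all
  interpret finite_measure M by fact
  show "integrable M (\<lambda>r. r)"
    by (rule integrable_const_bound[of _ B]) (use assms(3) meas in auto)
  show "integrable M (\<lambda>r. r\<^sup>2)"
  proof (rule integrable_const_bound[of _ "B\<^sup>2"])
    show "AE x in M. norm (x\<^sup>2) \<le> B\<^sup>2"
      using assms(3) by eventually_elim (auto intro: power_mono)
  qed (use meas in auto)
qed

definition reward_variance ::
  "('s::finite) pmf \<Rightarrow> ('s \<Rightarrow> ('a::finite) pmf) \<Rightarrow> ('s \<Rightarrow> 'a \<Rightarrow> real measure) \<Rightarrow> real" where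
  "reward_variance d0 pib R = (\<Sum>s\<in>UNIV. \<Sum>a\<in>UNIV. pmf d0 s * pmf (pib s) a *
      ((\<integral>r. r\<^sup>2 \<partial>(R s a)) - (Qstar R s a)\<^sup>2))"

lemma sq_loss_eq_sq_norm_mu_plus_variance:
  assumes R_prob: "\<And>s a. prob_space (R s a)"
    and R_borel: "\<And>s a. sets (R s a) = sets borel"
    and R_range: "\<And>s a. AE r in R s a. 0 \<le> r \<and> r \<le> Rmax"
  shows "sq_loss d0 pib R f
    = sq_norm_mu d0 pib (\<lambda>s a. f s a - Qstar R s a) + reward_variance d0 pib R"
proof -
  have "(\<integral>r. (f s a - r)\<^sup>2 \<partial>R s a)
      = (f s a - Qstar R s a)\<^sup>2 + ((\<integral>r. r\<^sup>2 \<partial>(R s a)) - (Qstar R s a)\<^sup>2)" for s a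
  proof -
    have "finite_measure (R s a)"
      using R_prob by (rule prob_space.finite_measure)
    then show ?thesis unfolding Qstar_def
      by (intro integral_square_diff_eq R_prob integrable_bounded_real_powers[OF _ R_borel R_range])
  qed
  then show ?thesis
    unfolding sq_loss_def sq_norm_mu_def reward_variance_def
    by (simp add: distrib_left sum.distrib)
qed

lemma sq_norm_mu_le_erm_error:
  assumes loss_eq: "\<And>f. sq_loss d0 pib R f
      = sq_norm_mu d0 pib (\<lambda>s a. f s a - Qstar R s a) + K"
    and "finite F" "fhat \<in> F"
    and fhat_erm: "sq_loss d0 pib R fhat - (MIN f\<in>F. sq_loss d0 pib R f) \<le> eps"
  shows "sq_norm_mu d0 pib (\<lambda>s a. fhat s a - Qstar R s a) \<le> eps + eps_approx d0 pib R F"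
proof -
  have "sq_norm_mu d0 pib (\<lambda>s a. fhat s a - Qstar R s a) - eps
      \<le> sq_norm_mu d0 pib (\<lambda>s a. f s a - Qstar R s a)" if "f \<in> F" for f
  proof -
    have "(MIN f\<in>F. sq_loss d0 pib R f) \<le> sq_loss d0 pib R f"
      using \<open>finite F\<close> that by (intro Min_le) auto
    then show ?thesis using fhat_erm loss_eq[of fhat] loss_eq[of f] by linarith
  qed
  then have "sq_norm_mu d0 pib (\<lambda>s a. fhat s a - Qstar R s a) - eps \<le> eps_approx d0 pib R F"
    unfolding eps_approx_def using \<open>fhat \<in> F\<close> by (intro cINF_greatest) auto
  then show ?thesis by simp
qed

lemma expectation_abs_at_policy_le:
  fixes d0 :: "('s::finite) pmf" and pib :: "'s \<Rightarrow> ('a::finite) pmf"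
  assumes C_pos: "0 < C" and cover: "\<And>s a. pmf (pib s) a \<ge> 1 / C"
  shows "(\<Sum>s\<in>UNIV. pmf d0 s * \<bar>g s (h s)\<bar>) \<le> sqrt (C * sq_norm_mu d0 pib g)"
proof -
  have "(\<Sum>s\<in>UNIV. pmf d0 s * \<bar>g s (h s)\<bar>)\<^sup>2 \<le> (\<Sum>s\<in>UNIV. pmf d0 s * \<bar>g s (h s)\<bar>\<^sup>2)"
    by (rule weighted_mean_square_le) (auto simp: sum_pmf_eq_1)
  also have "\<dots> \<le> (\<Sum>s\<in>UNIV. C * (\<Sum>a\<in>UNIV. pmf d0 s * pmf (pib s) a * (g s a)\<^sup>2))"
  proof (intro sum_mono)
    fix s
    have "1 \<le> C * pmf (pib s) (h s)"
      using cover[of s "h s"] C_pos by (simp add: field_simps)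
    then have "1 * (pmf d0 s * (g s (h s))\<^sup>2) \<le> C * pmf (pib s) (h s) * (pmf d0 s * (g s (h s))\<^sup>2)"
      by (intro mult_right_mono) auto
    then have "pmf d0 s * \<bar>g s (h s)\<bar>\<^sup>2 \<le> C * (pmf d0 s * pmf (pib s) (h s) * (g s (h s))\<^sup>2)"
      by (simp add: algebra_simps)
    also have "\<dots> \<le> C * (\<Sum>a\<in>UNIV. pmf d0 s * pmf (pib s) a * (g s a)\<^sup>2)"
      using C_pos
      by (intro mult_left_mono member_le_sum[where f="\<lambda>a. pmf d0 s * pmf (pib s) a * (g s a)\<^sup>2"])
        auto
    finally show "pmf d0 s * \<bar>g s (h s)\<bar>\<^sup>2 \<le> C * (\<Sum>a\<in>UNIV. pmf d0 s * pmf (pib s) a * (g s a)\<^sup>2)" .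
  qed
  also have "\<dots> = C * sq_norm_mu d0 pib g"
    by (simp add: sq_norm_mu_def sum_distrib_left)
  finally show ?thesis
    by (simp add: real_le_rsqrt sum_nonneg)
qed

lemma value_gap_le_greedy_error:
  fixes d0 :: "('s::finite) pmf" and R :: "'s \<Rightarrow> ('a::finite) \<Rightarrow> real measure"
  assumes "greedy f pol"
  obtains astar where "value_opt d0 R - value_pol d0 R pol
    \<le> (\<Sum>s\<in>UNIV. pmf d0 s * \<bar>f s (astar s) - Qstar R s (astar s)\<bar>)
     + (\<Sum>s\<in>UNIV. pmf d0 s * \<bar>f s (pol s) - Qstar R s (pol s)\<bar>)"
proof -
  have "\<exists>a. Qstar R s a = (MAX a. Qstar R s a)" for s
  proof -
    have "(MAX a. Qstar R s a) \<in> range (Qstar R s)"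
      by (intro Max_in) auto
    then show ?thesis by (elim rangeE) (rule exI, rule sym)
  qed
  then obtain astar where astar: "\<And>s. Qstar R s (astar s) = (MAX a. Qstar R s a)"
    by metis
  have "pmf d0 s * (MAX a. Qstar R s a) - pmf d0 s * Qstar R s (pol s)
      \<le> pmf d0 s * \<bar>f s (astar s) - Qstar R s (astar s)\<bar>
       + pmf d0 s * \<bar>f s (pol s) - Qstar R s (pol s)\<bar>" for s
  proof -
    have "f s (astar s) \<le> f s (pol s)"
      using \<open>greedy f pol\<close> unfolding greedy_def by auto
    then have "Qstar R s (astar s) - Qstar R s (pol s)
        \<le> \<bar>f s (astar s) - Qstar R s (astar s)\<bar> + \<bar>f s (pol s) - Qstar R s (pol s)\<bar>"
      by linarith
    then have "pmf d0 s * (Qstar R s (astar s) - Qstar R s (pol s))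
        \<le> pmf d0 s * (\<bar>f s (astar s) - Qstar R s (astar s)\<bar> + \<bar>f s (pol s) - Qstar R s (pol s)\<bar>)"
      by (intro mult_left_mono) auto
    then show ?thesis by (simp add: astar algebra_simps)
  qed
  then have "value_opt d0 R - value_pol d0 R pol
    \<le> (\<Sum>s\<in>UNIV. pmf d0 s * \<bar>f s (astar s) - Qstar R s (astar s)\<bar>
       + pmf d0 s * \<bar>f s (pol s) - Qstar R s (pol s)\<bar>)"
    unfolding value_opt_def value_pol_def sum_subtractf[symmetric] by (intro sum_mono)
  then show thesis by (intro that) (simp add: sum.distrib)
qed

theorem theorem2:
  fixes d0 :: "('s::finite) pmf"
    and pib :: "'s \<Rightarrow> ('a::finite) pmf"
    and R :: "'s \<Rightarrow> 'a \<Rightarrow> real measure"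
    and F :: "('s \<Rightarrow> 'a \<Rightarrow> real) set"
    and fhat :: "'s \<Rightarrow> 'a \<Rightarrow> real"
    and pol :: "'s \<Rightarrow> 'a"
    and Rmax C eps :: real
  assumes R_prob: "\<And>s a. prob_space (R s a)"
    and R_borel: "\<And>s a. sets (R s a) = sets borel"
    and R_range: "\<And>s a. AE r in R s a. 0 \<le> r \<and> r \<le> Rmax"
    and F_fin: "finite F"
    and F_range: "\<And>f s a. f \<in> F \<Longrightarrow> 0 \<le> f s a \<and> f s a \<le> Rmax"
    and fhat_in: "fhat \<in> F"
    and fhat_erm: "sq_loss d0 pib R fhat - (MIN f\<in>F. sq_loss d0 pib R f) \<le> eps"
    and C_pos: "0 < C"
    and cover: "\<And>s a. pmf (pib s) a \<ge> 1 / C"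
    and pi_greedy: "greedy fhat pol"
  shows "value_pol d0 R pol \<ge> value_opt d0 R - 2 * sqrt (C * (eps + eps_approx d0 pib R F))"
proof -
  define g where "g s a = fhat s a - Qstar R s a" for s a
  have "sq_norm_mu d0 pib g \<le> eps + eps_approx d0 pib R F"
    unfolding g_def
    using sq_loss_eq_sq_norm_mu_plus_variance[OF R_prob R_borel R_range] F_fin fhat_in fhat_erm
    by (rule sq_norm_mu_le_erm_error)
  then have norm_bound: "sqrt (C * sq_norm_mu d0 pib g) \<le> sqrt (C * (eps + eps_approx d0 pib R F))"
    using C_pos by simp
  obtain astar where "value_opt d0 R - value_pol d0 R pol
      \<le> (\<Sum>s\<in>UNIV. pmf d0 s * \<bar>g s (astar s)\<bar>) + (\<Sum>s\<in>UNIV. pmf d0 s * \<bar>g s (pol s)\<bar>)"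
    using value_gap_le_greedy_error[OF pi_greedy] unfolding g_def by blast
  also have "\<dots> \<le> sqrt (C * sq_norm_mu d0 pib g) + sqrt (C * sq_norm_mu d0 pib g)"
    by (intro add_mono expectation_abs_at_policy_le[OF C_pos cover])
  finally show ?thesis using norm_bound by linarith
qed

end
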